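(* Let $q\in\mathbb{N}$, $q\ge 1$, and $p\ge 3$. If a graph $G$ is $p$-ordered, then the $q$-complete graph $C_q(G)$ is $q(p-1)$-connected.
   Context: For a graph $G=(V,E)$ and $q\ge 1$, the $q$-complete graph $C_q(G)=(V_q,E_q)$ has vertex set $V_q=V^1\uplus\dots\uplus V^q$, where $V^i=\{v^i\mid v\in V\}$ is a copy of $V$, and edge set $E_q=\bigcup_{i,j\in\{1,\dots,q\}}\{\{u^i,v^j\}\mid \{u,v\}\in E\}$. For an integer $p\ge 3$, a graph is $p$-ordered if for every $p$-tuple $(x_1,\dots,x_p)$ of distinct vertices there is a cycle visiting $x_1,\dots,x_p$ in this order. A graph is $k$-connected if it has more than $k$ vertices and remains connected after deleting any set of fewer than $k$ vertices. *)

theory Defs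
  imports Main "HOL-Library.Sublist"
begin

definition graph :: "'a set \<Rightarrow> 'a set set \<Rightarrow> bool" where
  "graph V E \<longleftrightarrow> finite V \<and> (\<forall>e\<in>E. \<exists>u v. e = {u, v} \<and> u \<noteq> v \<and> u \<in> V \<and> v \<in> V)"

(* q-complete graph C_q(G): vertex v^i is represented as the pair (v, i), 1 <= i <= q *)
definition qcomplete_V :: "nat \<Rightarrow> 'a set \<Rightarrow> ('a \<times> nat) set" where
  "qcomplete_V q V = V \<times> {1..q}"

definition qcomplete_E :: "nat \<Rightarrow> 'a set set \<Rightarrow> ('a \<times> nat) set set" where
  "qcomplete_E q E = {{(u, i), (v, j)} | u v i j. {u, v} \<in> E \<and> i \<in> {1..q} \<and> j \<in> {1..q}}"

definition is_cycle :: "'a set \<Rightarrow> 'a set set \<Rightarrow> 'a list \<Rightarrow> bool" where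
  "is_cycle V E cs \<longleftrightarrow> length cs \<ge> 3 \<and> distinct cs \<and> set cs \<subseteq> V \<and>
     (\<forall>i < length cs. {cs ! i, cs ! ((i + 1) mod length cs)} \<in> E)"

definition p_ordered :: "nat \<Rightarrow> 'a set \<Rightarrow> 'a set set \<Rightarrow> bool" where
  "p_ordered p V E \<longleftrightarrow> card V \<ge> p \<and>
     (\<forall>xs. length xs = p \<and> distinct xs \<and> set xs \<subseteq> V \<longrightarrow>
        (\<exists>cs. is_cycle V E cs \<and> subseq xs cs))"

definition connected_graph :: "'a set \<Rightarrow> 'a set set \<Rightarrow> bool" where
  "connected_graph V E \<longleftrightarrow>
     (\<forall>u\<in>V. \<forall>v\<in>V. (\<lambda>x y. x \<in> V \<and> y \<in> V \<and> {x, y} \<in> E)\<^sup>*\<^sup>* u v)"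

definition k_connected :: "nat \<Rightarrow> 'a set \<Rightarrow> 'a set set \<Rightarrow> bool" where
  "k_connected k V E \<longleftrightarrow> finite V \<and> card V > k \<and>
     (\<forall>S. S \<subseteq> V \<and> card S < k \<longrightarrow> connected_graph (V - S) {e \<in> E. e \<inter> S = {}})"

end

theory Submission
  imports Defs
begin

text \<open>
  Delete a set \<open>S\<close> of fewer than \<open>q(p - 1)\<close> vertices from \<open>C\<^sub>q(G)\<close>. A vertex \<open>v\<close> of \<open>G\<close> is
  lost entirely only if all its \<open>q\<close> copies lie in \<open>S\<close>, so fewer than \<open>p - 1\<close> vertices \<open>T\<close> of \<open>G\<close>
  are lost. For \<open>u \<noteq> v\<close> outside \<open>T\<close>, a cycle through \<open>u, v, t\<^sub>1, \<dots>, t\<^sub>k\<close> (in this order, with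
  \<open>T \<subseteq> {t\<^sub>i}\<close>, padded to \<open>p\<close> vertices) contains an arc from \<open>u\<close> to \<open>v\<close> avoiding \<open>T\<close>, so \<open>G - T\<close>
  is connected. Every walk in \<open>G - T\<close> lifts to the surviving copies, because copies of
  adjacent vertices are adjacent in \<open>C\<^sub>q(G)\<close>; two copies of the same vertex are joined through
  a common neighbour.
\<close>

definition adjacent :: "'a set \<Rightarrow> 'a set set \<Rightarrow> 'a \<Rightarrow> 'a \<Rightarrow> bool" where
  "adjacent V E x y \<longleftrightarrow> x \<in> V \<and> y \<in> V \<and> {x, y} \<in> E"

lemma connected_graph_iff_adjacent:
  "connected_graph V E \<longleftrightarrow> (\<forall>u\<in>V. \<forall>v\<in>V. (adjacent V E)\<^sup>*\<^sup>* u v)"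
  by (simp add: connected_graph_def adjacent_def [abs_def])

lemma connected_graph_restrict_edges:
  assumes "connected_graph V E" and "V \<inter> S = {}"
  shows "connected_graph V {e \<in> E. e \<inter> S = {}}"
proof -
  have "adjacent V {e \<in> E. e \<inter> S = {}} = adjacent V E"
    using assms(2) by (auto simp: adjacent_def fun_eq_iff)
  then show ?thesis using assms(1) by (simp add: connected_graph_iff_adjacent)
qed

lemma rtranclp_chain:
  assumes "\<And>k. k < n \<Longrightarrow> R (f k) (f (Suc k))"
  shows "R\<^sup>*\<^sup>* (f 0) (f n)"
  using assms
proof (induction n)
  case (Suc n)
  then show ?case by (meson less_Suc_eq rtranclp.rtrancl_into_rtrancl)
qed simp

lemma is_cycle_arc_walk:
  assumes cyc: "is_cycle V E (a @ w @ d)" and "w \<noteq> []"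
  shows "(adjacent (set w) E)\<^sup>*\<^sup>* (hd w) (last w)"
proof -
  let ?cs = "a @ w @ d"
  have "(adjacent (set w) E)\<^sup>*\<^sup>* (w ! 0) (w ! (length w - 1))"
  proof (rule rtranclp_chain)
    fix k assume k: "k < length w - 1"
    then have "length a + k + 1 < length ?cs" by simp
    then have "{?cs ! (length a + k), ?cs ! (length a + k + 1)} \<in> E"
      using cyc unfolding is_cycle_def by (metis add_lessD1 mod_less)
    then have "{w ! k, w ! Suc k} \<in> E"
      using k by (simp add: nth_append less_diff_conv)
    then show "adjacent (set w) E (w ! k) (w ! Suc k)"
      using k by (simp add: adjacent_def)
  qed
  then show ?thesis using \<open>w \<noteq> []\<close> by (simp add: hd_conv_nth last_conv_nth)
qed

lemma distinct_list_extending: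
  assumes "finite V" and "T \<subseteq> V" and "u \<in> V - T" and "v \<in> V - T" and "u \<noteq> v"
    and "card T + 2 \<le> n" and "n \<le> card V"
  obtains l where "length l + 2 = n" and "distinct (u # v # l)" and "set l \<subseteq> V"
    and "T \<subseteq> set l"
proof -
  have "finite T" using assms(1,2) finite_subset by blast
  have "T \<subseteq> V - {u, v}" using assms(2-4) by blast
  then have "card (V - {u, v} - T) = card V - 2 - card T"
    using assms(1,3-5) \<open>finite T\<close> by (simp add: card_Diff_subset)
  then have "n - 2 - card T \<le> card (V - {u, v} - T)" using assms(7) by linarith
  then obtain Y where Y: "Y \<subseteq> V - {u, v} - T" "card Y = n - 2 - card T" "finite Y"
    by (rule obtain_subset_with_card_n)
  obtain l where l: "set l = T \<union> Y" "distinct l"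
    using finite_distinct_list[of "T \<union> Y"] \<open>finite T\<close> \<open>finite Y\<close> by blast
  have "length l = card (T \<union> Y)" using l by (metis distinct_card)
  also have "\<dots> = card T + card Y"
    using Y \<open>finite T\<close> by (intro card_Un_disjoint) auto
  finally have "length l + 2 = n" using Y(2) assms(6) by simp
  moreover have "distinct (u # v # l)" using l Y(1) assms(3-5) by auto
  ultimately show ?thesis using that l Y(1) assms(2) by auto
qed

lemma p_orderedD:
  assumes "p_ordered p V E" and "length xs = p" and "distinct xs" and "set xs \<subseteq> V"
  shows "\<exists>cs. is_cycle V E cs \<and> subseq xs cs"
  using assms by (simp add: p_ordered_def)

lemma p_ordered_minus_connected:
  assumes "graph V E" and "p_ordered p V E" and "T \<subseteq> V" and "card T + 2 \<le> p"
  shows "connected_graph (V - T) E"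
  unfolding connected_graph_iff_adjacent
proof (intro ballI)
  fix u v assume u: "u \<in> V - T" and v: "v \<in> V - T"
  show "(adjacent (V - T) E)\<^sup>*\<^sup>* u v"
  proof (cases "u = v")
    case False
    have "finite V" "p \<le> card V" using assms(1,2) by (simp_all add: graph_def p_ordered_def)
    then obtain l where l: "length l + 2 = p" "distinct (u # v # l)" "set l \<subseteq> V"
      "T \<subseteq> set l"
      using distinct_list_extending[OF _ assms(3) u v False assms(4)] by blast
    then have "length (u # v # l) = p" "set (u # v # l) \<subseteq> V" using u v by auto
    then obtain cs where cs: "is_cycle V E cs" "subseq (u # v # l) cs"
      using p_orderedD[OF assms(2) _ l(2)] by blast
    obtain a b where ab: "cs = a @ u # b" "subseq (v # l) b"
      using list_emb_ConsD[OF cs(2)] by auto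
    obtain c d where cd: "b = c @ v # d" "subseq l d"
      using list_emb_ConsD[OF ab(2)] by auto
    define w where "w = u # c @ [v]"
    have cyc: "is_cycle V E (a @ w @ d)" using cs(1) ab cd by (simp add: w_def)
    have "set w \<inter> set d = {}" "set w \<subseteq> V"
      using cyc unfolding is_cycle_def by auto
    moreover have "T \<subseteq> set d" using l(4) list_emb_set[OF cd(2)] by blast
    ultimately have "set w \<subseteq> V - T" by blast
    then have "adjacent (set w) E \<le> adjacent (V - T) E" unfolding adjacent_def by blast
    moreover have "(adjacent (set w) E)\<^sup>*\<^sup>* u v"
      using is_cycle_arc_walk[OF cyc] by (simp add: w_def)
    ultimately show ?thesis by (rule rtranclp_mono[THEN predicate2D])
  qed simp
qed

lemma qcomplete_adjacent_copies:
  assumes "R \<subseteq> qcomplete_V q V" and "{x, y} \<in> E" and "(x, i) \<in> R" and "(y, j) \<in> R"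
  shows "adjacent R (qcomplete_E q E) (x, i) (y, j)"
  using assms unfolding adjacent_def qcomplete_E_def qcomplete_V_def by blast

lemma qcomplete_lift_walk:
  assumes R: "R \<subseteq> qcomplete_V q V" and walk: "(adjacent (fst ` R) E)\<^sup>*\<^sup>* u v"
    and "(u, i) \<in> R"
  shows "\<exists>j. (v, j) \<in> R \<and> (adjacent R (qcomplete_E q E))\<^sup>*\<^sup>* (u, i) (v, j)"
  using walk
proof (induction rule: rtranclp_induct)
  case (step y z)
  then obtain j where j: "(y, j) \<in> R" "(adjacent R (qcomplete_E q E))\<^sup>*\<^sup>* (u, i) (y, j)"
    by blast
  obtain k where k: "(z, k) \<in> R" using step(2) by (auto simp: adjacent_def)
  have "{y, z} \<in> E" using step(2) by (simp add: adjacent_def)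
  then have "adjacent R (qcomplete_E q E) (y, j) (z, k)"
    using qcomplete_adjacent_copies[OF R _ j(1) k] by blast
  then show ?case using j k by (meson rtranclp.rtrancl_into_rtrancl)
qed (use assms in blast)

lemma qcomplete_connected_lift:
  assumes R: "R \<subseteq> qcomplete_V q V" and conn: "connected_graph (fst ` R) E"
    and two: "w\<^sub>1 \<in> fst ` R" "w\<^sub>2 \<in> fst ` R" "w\<^sub>1 \<noteq> w\<^sub>2"
  shows "connected_graph R (qcomplete_E q E)"
  unfolding connected_graph_iff_adjacent
proof (intro ballI)
  let ?adj = "adjacent R (qcomplete_E q E)"
  have copies: "?adj\<^sup>*\<^sup>* (v, i) (v, j)" if vi: "(v, i) \<in> R" and vj: "(v, j) \<in> R" for v i j
  proof -
    obtain w where "w \<in> fst ` R" "w \<noteq> v" using two by metis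
    then have "(adjacent (fst ` R) E)\<^sup>*\<^sup>* v w" "v \<noteq> w"
      using conn vi by (force simp: connected_graph_iff_adjacent)+
    then obtain w' where "adjacent (fst ` R) E v w'"
      by (metis converse_rtranclpE)
    then obtain k where k: "(w', k) \<in> R" and "{v, w'} \<in> E"
      by (auto simp: adjacent_def)
    then have "?adj (v, i) (w', k)" "?adj (w', k) (v, j)"
      using qcomplete_adjacent_copies[OF R] vi vj by (auto simp: insert_commute)
    then show ?thesis by (meson converse_rtranclp_into_rtranclp r_into_rtranclp)
  qed
  fix x y assume "x \<in> R" "y \<in> R"
  then obtain u i v j where x: "x = (u, i)" "(u, i) \<in> R" and y: "y = (v, j)" "(v, j) \<in> R"
    by (cases x, cases y) auto
  then have "(adjacent (fst ` R) E)\<^sup>*\<^sup>* u v"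
    using conn by (force simp: connected_graph_iff_adjacent)
  then obtain k where "(v, k) \<in> R" "?adj\<^sup>*\<^sup>* (u, i) (v, k)"
    using qcomplete_lift_walk[OF R] x by blast
  then show "?adj\<^sup>*\<^sup>* x y"
    using copies y x by (meson rtranclp_trans)
qed

lemma card_fully_deleted_le:
  assumes "finite S"
  shows "card {v \<in> V. \<forall>i\<in>{1..q}. (v, i) \<in> S} * q \<le> card S"
proof -
  let ?T = "{v \<in> V. \<forall>i\<in>{1..q}. (v, i) \<in> S}"
  have "?T \<times> {1..q} \<subseteq> S" by auto
  then have "card (?T \<times> {1..q}) \<le> card S" using assms by (rule card_mono[rotated])
  then show ?thesis by (simp add: card_cartesian_product)
qed

lemma qcomplete_minus_connected:
  assumes G: "graph V E" and po: "p_ordered p V E"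
    and S: "S \<subseteq> qcomplete_V q V" "card S < q * (p - 1)"
  shows "connected_graph (qcomplete_V q V - S) {e \<in> qcomplete_E q E. e \<inter> S = {}}"
proof -
  define T where "T = {v \<in> V. \<forall>i\<in>{1..q}. (v, i) \<in> S}"
  have proj: "fst ` (qcomplete_V q V - S) = V - T"
    unfolding T_def qcomplete_V_def by force
  have "finite V" and "p \<le> card V" using G po by (simp_all add: graph_def p_ordered_def)
  then have "card T * q \<le> card S"
    unfolding T_def using S(1) by (intro card_fully_deleted_le) (simp add: qcomplete_V_def finite_subset)
  then have "card T * q < (p - 1) * q" using S(2) by (metis le_less_trans mult.commute)
  then have T: "card T + 2 \<le> p" "T \<subseteq> V" by (auto simp: T_def)
  then have "2 \<le> card (V - T)"
    using \<open>finite V\<close> \<open>p \<le> card V\<close> by (simp add: card_Diff_subset finite_subset)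
  then obtain W where "W \<subseteq> V - T" "card W = 2" by (metis obtain_subset_with_card_n)
  then obtain w\<^sub>1 w\<^sub>2 where "w\<^sub>1 \<in> V - T" "w\<^sub>2 \<in> V - T" "w\<^sub>1 \<noteq> w\<^sub>2"
    by (auto simp: card_2_iff)
  moreover have "connected_graph (fst ` (qcomplete_V q V - S)) E"
    using p_ordered_minus_connected[OF G po T(2,1)] proj by simp
  ultimately have "connected_graph (qcomplete_V q V - S) (qcomplete_E q E)"
    using proj by (intro qcomplete_connected_lift[OF Diff_subset]) auto
  then show ?thesis by (rule connected_graph_restrict_edges) blast
qed

theorem lemma5p5:
  fixes V :: "'a set" and E :: "'a set set" and p q :: nat
  assumes "graph V E" and "q \<ge> 1" and "p \<ge> 3" and "p_ordered p V E"
  shows "k_connected (q * (p - 1)) (qcomplete_V q V) (qcomplete_E q E)"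
proof -
  have fin: "finite (qcomplete_V q V)" and cardV: "p \<le> card V"
    using assms(1,4) by (auto simp: graph_def p_ordered_def qcomplete_V_def)
  have "q * (p - 1) < q * p" using assms(2,3) by simp
  also have "\<dots> \<le> card V * q" using cardV by simp
  finally have "q * (p - 1) < card V * q" .
  with fin show ?thesis
    using qcomplete_minus_connected[OF assms(1,4)]
    by (simp add: k_connected_def qcomplete_V_def card_cartesian_product)
qed

end
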